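(* Let $n\ge 2$, let $\mathcal{L}\subset\mathbb{R}^n$ be a tame lattice with Lagrangian basis $\{\mathbf{e}_1,\dots,\mathbf{e}_n\}$, $\mathbf{v}_1=\sum_i\mathbf{e}_i$, $a:=\langle\mathbf{e}_1,\mathbf{e}_1\rangle$, $h:=-\langle\mathbf{e}_1,\mathbf{e}_2\rangle$. Let $r,s$ be integers with $0\ne|r|<n$, $m=r+sn$, and suppose $$\frac{na-1}{n^2-1}\le\left(\frac{m}{r}\right)^2\le\frac{(na-1)(n+1)}{n-1}.$$ Then $$\frac{1}{2^n}\le\delta(\mathcal{L}_{\mathbf{v}_1}^{(r,s)})\le\frac{1}{2^{n/2}\sqrt{n+1}},$$ i.e. $\delta(\mathbb{Z}^n)\le\delta(\mathcal{L}_{\mathbf{v}_1}^{(r,s)})\le\delta(A_n)$. The lower bound is attained when $(m/r)^2=\frac{na-1}{n-1}$ and the upper bound is attained when $(m/r)^2=\frac{(na-1)(n+1)}{n-1}$.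
   Context: Tame lattice: a full-rank lattice $\mathcal{L}\subset\mathbb{R}^n$ with a basis $\{\mathbf{e}_1,\dots,\mathbf{e}_n\}$ (Lagrangian basis) and nonzero $\mathbf{v}_1\in\mathcal{L}\cap\mathcal{L}^*$ such that $\sum_i\mathbf{e}_i=\mathbf{v}_1$, $\langle\mathbf{e}_i,\mathbf{v}_1\rangle=1$, $\langle\mathbf{e}_i,\mathbf{e}_i\rangle=a$, $\langle\mathbf{e}_i,\mathbf{e}_j\rangle=-h$ ($i\ne j$); then $a-h(n-1)=1$. $\mathcal{L}^{(r,s)}_{\mathbf{v}_1}$ is the image of $\mathcal{L}$ under $\mathbf{x}\mapsto r\mathbf{x}+s\langle\mathbf{x},\mathbf{v}_1\rangle\mathbf{v}_1$. Center density: $\delta(\Lambda)=\lambda_1(\Lambda)^n/(2^n\operatorname{vol}(\Lambda))$. $A_n=\{\mathbf{x}\in\mathbb{Z}^{n+1}:\sum_i x_i=0\}$, a rank-$n$ lattice with $\delta(A_n)=2^{-n/2}(n+1)^{-1/2}$; $\delta(\mathbb{Z}^n)=2^{-n}$. *)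

theory Defs
  imports "HOL-Analysis.Analysis"
begin

definition lattice_gen :: "('n::finite \<Rightarrow> real^'n) \<Rightarrow> (real^'n) set" where
  "lattice_gen B = {\<Sum>i\<in>UNIV. of_int (k i) *\<^sub>R B i | k. True}"

definition is_lattice_basis :: "('n::finite \<Rightarrow> real^'n) \<Rightarrow> bool" where
  "is_lattice_basis B \<longleftrightarrow> inj B \<and> independent (range B)"

definition is_full_lattice :: "(real^'n::finite) set \<Rightarrow> bool" where
  "is_full_lattice L \<longleftrightarrow> (\<exists>B. is_lattice_basis B \<and> lattice_gen B = L)"

definition dual_lattice :: "(real^'n::finite) set \<Rightarrow> (real^'n) set" where
  "dual_lattice L = {y. \<forall>x\<in>L. x \<bullet> y \<in> \<int>}"

definition covol :: "(real^'n::finite) set \<Rightarrow> real" where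
  "covol L = \<bar>det (\<chi> i. (SOME B. is_lattice_basis B \<and> lattice_gen B = L) i)\<bar>"

definition lambda1 :: "(real^'n::finite) set \<Rightarrow> real" where
  "lambda1 L = Inf {norm x | x. x \<in> L \<and> x \<noteq> 0}"

definition center_density :: "(real^'n::finite) set \<Rightarrow> real" where
  "center_density L = lambda1 L ^ CARD('n) / (2 ^ CARD('n) * covol L)"

definition tame_basis :: "('n::finite \<Rightarrow> real^'n) \<Rightarrow> real \<Rightarrow> real \<Rightarrow> bool" where
  "tame_basis e a h \<longleftrightarrow>
     is_lattice_basis e \<and>
     (let v1 = (\<Sum>i\<in>UNIV. e i) in
        v1 \<noteq> 0 \<and> v1 \<in> lattice_gen e \<and> v1 \<in> dual_lattice (lattice_gen e) \<and>
        (\<forall>i. e i \<bullet> v1 = 1) \<and>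
        (\<forall>i. e i \<bullet> e i = a) \<and> (\<forall>i j. i \<noteq> j \<longrightarrow> e i \<bullet> e j = - h))"

definition twist_lattice :: "real \<Rightarrow> real \<Rightarrow> (real^'n::finite) \<Rightarrow> (real^'n) set \<Rightarrow> (real^'n) set" where
  "twist_lattice r s v L = (\<lambda>x. r *\<^sub>R x + (s * (x \<bullet> v)) *\<^sub>R v) ` L"

end

theory Submission
  imports Defs
begin

text \<open>
  With \<open>v = \<Sum>e\<^sub>i\<close>, the twisted lattice has the basis \<open>b\<^sub>i = r e\<^sub>i + s v\<close>, whose Gram matrix is
  \<open>\<alpha> I + \<beta> J\<close> with \<open>\<alpha> = r\<^sup>2 (a + h)\<close> and \<open>\<alpha> + n \<beta> = m\<^sup>2\<close>. Put \<open>u = m\<^sup>2 / \<alpha> = (m/r)\<^sup>2 / (a + h)\<close>;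
  the hypothesis says exactly \<open>1/(n+1) \<le> u \<le> n+1\<close>. The center density depends on \<open>u\<close> alone:
  the covolume is \<open>\<surd>(\<alpha>\<^sup>n u)\<close>, and \<open>|\<Sum>k\<^sub>i b\<^sub>i|\<^sup>2 = \<alpha> (\<Sum>k\<^sub>i\<^sup>2 + (u - 1)(\<Sum>k\<^sub>i)\<^sup>2 / n)\<close>, so that
  \<open>\<lambda>\<^sub>1\<^sup>2 / \<alpha>\<close> lies between \<open>min 2 (min ((n - 1 + u)/n) (n u))\<close> (a bound valid for all nonzero
  integer vectors \<open>k\<close>) and \<open>(n - 1 + u)/n\<close> (attained at \<open>k = e\<^sub>1\<close>). The two density bounds
  then reduce to the one-variable inequalities \<open>u \<le> min(\<dots>)\<^sup>n\<close> (AM-GM and Bernoulli) and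
  \<open>((n - 1 + u)/n)\<^sup>n (n + 1) \<le> 2\<^sup>n u\<close> (convexity in \<open>u\<close>). At \<open>u = 1\<close> and \<open>u = n + 1\<close> the lower
  and upper estimates of \<open>\<lambda>\<^sub>1\<close> coincide.
\<close>

section \<open>Elementary inequalities\<close>

lemma binomial_three_terms_le:
  fixes x :: real assumes "x \<ge> 0"
  shows "1 + real n * x + real n * (real n - 1) / 2 * x^2 \<le> (1 + x) ^ n"
proof (induction n)
  case 0 then show ?case by simp
next
  case (Suc n)
  have "0 \<le> real n * (real n - 1)" by (cases n) auto
  with assms have "0 \<le> real n * (real n - 1) / 2 * x^3" by simp
  moreover have "(1 + real n * x + real n * (real n - 1) / 2 * x^2) * (1 + x)
      - (1 + real (Suc n) * x + real (Suc n) * (real (Suc n) - 1) / 2 * x^2)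
      = real n * (real n - 1) / 2 * x^3"
    by (simp add: algebra_simps power2_eq_square power3_eq_cube add_divide_distrib diff_divide_distrib)
  ultimately have "1 + real (Suc n) * x + real (Suc n) * (real (Suc n) - 1) / 2 * x^2
      \<le> (1 + real n * x + real n * (real n - 1) / 2 * x^2) * (1 + x)"
    by linarith
  also have "\<dots> \<le> (1 + x) ^ n * (1 + x)"
    using Suc assms by (intro mult_right_mono) auto
  finally show ?case by (simp add: mult.commute)
qed

lemma succ_square_le_two_power: "n \<ge> 2 \<Longrightarrow> 4 * (real n + 1)^2 \<le> 9 * 2 ^ n"
proof (induction n rule: nat_induct_at_least)
  case base then show ?case by (simp add: power2_eq_square)
next
  case (Suc n)
  have "(2::real) * 2 \<le> real n * real n" using mult_mono[of 2 "real n" 2 "real n"] Suc(1) by simp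
  then have "4 * (real (Suc n) + 1)^2 \<le> 2 * (4 * (real n + 1)^2)"
    by (simp add: power2_eq_square algebra_simps)
  also have "\<dots> \<le> 2 * (9 * 2^n)" using Suc by simp
  finally show ?case by simp
qed

lemma am_gm_ones:
  fixes u :: real assumes "N \<ge> 1" "u > 0"
  shows "u \<le> ((real N - 1 + u) / real N) ^ N"
proof -
  have N0: "real N > 0" using assms by simp
  have "-1 \<le> (u - 1) / real N" using N0 assms by (simp add: field_simps)
  from Bernoulli_inequality[OF this, of N]
  show ?thesis using N0 by (simp add: field_simps)
qed

text \<open>The value at the left endpoint \<open>u = 1 / (N + 1)\<close> of the next lemma, where
  \<open>(N - 1 + u) / N = N / (N + 1)\<close>.\<close>
lemma mean_power_le_two_power_endpoint:
  assumes "N \<ge> 2"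
  shows "(real N + 1) * (real N / (real N + 1)) ^ N \<le> 2 ^ N / (real N + 1)"
proof -
  have N0: "real N > 0" using assms by simp
  have "1 + real N * (1 / real N) + real N * (real N - 1) / 2 * (1 / real N)^2 \<le> (1 + 1 / real N)^N"
    by (rule binomial_three_terms_le) simp
  moreover have "1 + real N * (1 / real N) + real N * (real N - 1) / 2 * (1 / real N)^2
      = 2 + (real N - 1) / (2 * real N)"
    using N0 by (simp add: field_simps power2_eq_square)
  moreover have "1 / 4 \<le> (real N - 1) / (2 * real N)" using N0 assms by (simp add: field_simps)
  ultimately have "9 / 4 \<le> (1 + 1 / real N)^N" by linarith
  then have "9 / 4 * 2^N \<le> 2^N * (1 + 1 / real N)^N" by (simp add: mult.commute)
  then have "(real N + 1)^2 \<le> 2^N * (1 + 1 / real N)^N"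
    using succ_square_le_two_power[OF assms] by linarith
  also have "(1 + 1 / real N)^N = (real N + 1)^N / real N ^ N"
    using N0 by (simp add: field_simps power_divide)
  finally have "(real N + 1)^2 * real N ^ N \<le> 2^N * (real N + 1)^N"
    using N0 by (simp add: field_simps)
  then show ?thesis using N0 by (simp add: field_simps power_divide power2_eq_square)
qed

lemma convex_on_power_nonneg: "convex_on {0::real..} (\<lambda>x. x ^ n)"
  by (cases "even n")
    (auto intro: convex_on_subset[OF convex_power_even] convex_power_odd)

text \<open>Convexity reduces this to the two endpoints \<open>u = 1 / (N + 1)\<close> and \<open>u = N + 1\<close>;
  at the latter it is an equality.\<close>
lemma mean_power_le_two_power:
  fixes u :: real
  assumes N2: "N \<ge> 2" and lo: "1 / (real N + 1) \<le> u" and hi: "u \<le> real N + 1"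
  shows "((real N - 1 + u) / real N) ^ N * (real N + 1) \<le> 2 ^ N * u"
proof -
  define p where "p = 1 / (real N + 1)"
  define q where "q = real N + 1"
  define f where "f = (\<lambda>w. (real N - 1 + w) / real N)"
  define t where "t = (u - p) / (q - p)"
  have N0: "real N > 0" using N2 by simp
  have pq: "p < q" unfolding p_def q_def using N0 by (simp add: field_simps add_pos_pos)
  have t01: "0 \<le> t" "t \<le> 1" unfolding t_def using lo hi pq p_def q_def by (auto simp: divide_le_eq_1)
  have "t * (q - p) = u - p" unfolding t_def using pq by simp
  then have u_eq: "u = (1 - t) * p + t * q" by (simp add: algebra_simps)
  have "real N - 1 + p = real N * real N / (real N + 1)" unfolding p_def using N0 by (simp add: field_simps)
  then have fp: "f p = real N / (real N + 1)" unfolding f_def using N0 by simp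
  have fq: "f q = 2" unfolding f_def q_def using N0 by (simp add: field_simps)
  have fu: "f u = (1 - t) * f p + t * f q" unfolding f_def u_eq using N0 by (simp add: field_simps)
  have "f u ^ N \<le> (1 - t) * f p ^ N + t * f q ^ N"
    unfolding fu using convex_onD[OF convex_on_power_nonneg, of t "f p" "f q" N] t01 fp fq by simp
  then have "f u ^ N * (real N + 1) \<le> ((1 - t) * f p ^ N + t * f q ^ N) * (real N + 1)"
    by (rule mult_right_mono) simp
  also have "\<dots> = (1 - t) * ((real N + 1) * f p ^ N) + t * ((real N + 1) * f q ^ N)"
    by (simp add: algebra_simps)
  also have "\<dots> \<le> (1 - t) * (2^N * p) + t * (2^N * q)"
    using mean_power_le_two_power_endpoint[OF N2] t01 fp fq unfolding p_def q_def
    by (intro add_mono mult_left_mono) auto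
  also have "\<dots> = 2^N * u" unfolding u_eq by (simp add: algebra_simps)
  finally show ?thesis unfolding f_def .
qed

lemma le_mult_power:
  fixes u :: real assumes N2: "N \<ge> 2" and lo: "1 / (real N + 1) \<le> u"
  shows "u \<le> (real N * u) ^ N"
proof -
  have N0: "real N > 0" using N2 by simp
  have "0 < 1 / (real N + 1)" by simp
  then have u0: "u > 0" using lo by linarith
  show ?thesis
  proof (cases "real N * u \<ge> 1")
    case True
    have "u \<le> real N * u" using u0 N2 by simp
    also have "\<dots> \<le> (real N * u) ^ N" using True N2 by (simp add: self_le_power)
    finally show ?thesis .
  next
    case False
    have "-1 \<le> -1 / (real N + 1)" using N0 by (simp add: field_simps)
    from Bernoulli_inequality[OF this, of "N - 1"]
    have "2 / (real N + 1) \<le> (real N / (real N + 1)) ^ (N - 1)"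
      using N2 by (simp add: of_nat_diff field_simps)
    also have "\<dots> \<le> (real N * u) ^ (N - 1)"
      using mult_left_mono[OF lo, of "real N"] by (intro power_mono) auto
    finally have "2 / (real N + 1) * (real N * u) \<le> (real N * u) ^ (N - 1) * (real N * u)"
      using u0 N0 by (intro mult_right_mono) auto
    moreover have "u \<le> 2 / (real N + 1) * (real N * u)" using u0 N2 by (simp add: field_simps)
    moreover have "(real N * u) ^ (N - 1) * (real N * u) = (real N * u) ^ N"
      using N2 by (simp add: power_eq_if)
    ultimately show ?thesis by linarith
  qed
qed

lemma sqrt_two_power_divide:
  "sqrt (2 ^ n / x) / 2 ^ n = 1 / (2 powr (real n / 2) * sqrt x)"
proof -
  define q where "q = sqrt (2 ^ n :: real)"
  have "2 powr (real n / 2) = q" unfolding q_def by (simp add: powr_half_sqrt_powr powr_realpow)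
  moreover have "2 ^ n = q * q" "q > 0" unfolding q_def by simp_all
  ultimately show ?thesis by (simp add: real_sqrt_divide field_simps)
qed

text \<open>The values of \<open>\<Sum>k\<^sub>i\<^sup>2 + (u - 1) (\<Sum>k\<^sub>i)\<^sup>2 / N\<close> at \<open>k = e\<^sub>1 - e\<^sub>2\<close>, \<open>k = e\<^sub>1\<close>
  and \<open>k = (1, \<dots>, 1)\<close>.\<close>
definition min_norm_bound :: "nat \<Rightarrow> real \<Rightarrow> real" where
  "min_norm_bound N u = min 2 (min ((real N - 1 + u) / real N) (real N * u))"

lemma le_min_norm_bound_power:
  fixes u :: real
  assumes N2: "N \<ge> 2" and lo: "1 / (real N + 1) \<le> u" and hi: "u \<le> real N + 1"
  shows "u \<le> min_norm_bound N u ^ N"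
proof -
  have "0 < 1 / (real N + 1)" by simp
  then have u0: "u > 0" using lo by linarith
  have "Suc N \<le> 2 ^ N" using less_exp by (rule Suc_leI)
  then have "real (Suc N) \<le> real (2 ^ N)" by (simp only: of_nat_le_iff)
  then have "real N + 1 \<le> 2 ^ N" by simp
  then have "u \<le> 2 ^ N" using hi by simp
  moreover have "u \<le> ((real N - 1 + u) / real N) ^ N" using am_gm_ones[of N u] N2 u0 by simp
  moreover have "u \<le> (real N * u) ^ N" using le_mult_power[OF N2 lo] .
  ultimately show ?thesis unfolding min_norm_bound_def min_def by auto
qed

text \<open>\<open>g \<tau> = \<tau> - (1 - u) \<tau>\<^sup>2 / N\<close> is concave, with \<open>g 1 = (N - 1 + u) / N\<close> and
  \<open>g N = N u\<close>.\<close>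
lemma min_norm_bound_le_concave:
  fixes u \<tau> :: real
  assumes N2: "N \<ge> 2" and u1: "u \<le> 1" and \<tau>1: "1 \<le> \<tau>" and \<tau>N: "\<tau> \<le> real N"
  shows "min_norm_bound N u \<le> \<tau> - (1 - u) * \<tau>^2 / real N"
proof -
  define b where "b = min_norm_bound N u"
  have N0: "real N > 0" using N2 by simp
  have "(real N - \<tau>) * b \<le> (real N - \<tau>) * ((real N - 1 + u) / real N)"
    using \<tau>N by (intro mult_left_mono) (auto simp: b_def min_norm_bound_def)
  moreover have "(\<tau> - 1) * b \<le> (\<tau> - 1) * (real N * u)"
    using \<tau>1 by (intro mult_left_mono) (auto simp: b_def min_norm_bound_def)
  moreover have "0 \<le> (real N - 1) * (1 - u) * (\<tau> - 1) * (real N - \<tau>) / real N"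
    using N2 u1 \<tau>1 \<tau>N by (intro divide_nonneg_pos mult_nonneg_nonneg) auto
  moreover have "(real N - 1) * (\<tau> - (1 - u) * \<tau>^2 / real N)
      = (real N - \<tau>) * ((real N - 1 + u) / real N) + (\<tau> - 1) * (real N * u)
        + (real N - 1) * (1 - u) * (\<tau> - 1) * (real N - \<tau>) / real N"
    using N0 by (simp add: field_simps power2_eq_square)
  ultimately have "(real N - 1) * b \<le> (real N - 1) * (\<tau> - (1 - u) * \<tau>^2 / real N)"
    by (simp add: algebra_simps)
  then show ?thesis unfolding b_def using N2 by simp
qed

lemma min_norm_bound_le:
  fixes S t u :: real
  assumes N2: "N \<ge> 2" and u0: "u > 0" and tS: "\<bar>t\<bar> \<le> S" and tNS: "t^2 \<le> real N * S"
    and t0: "t = 0 \<Longrightarrow> 2 \<le> S" and t1: "t \<noteq> 0 \<Longrightarrow> 1 \<le> \<bar>t\<bar>"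
  shows "min_norm_bound N u \<le> S + (u - 1) * t^2 / real N"
proof -
  have N0: "real N > 0" using N2 by simp
  consider "t = 0" | "t \<noteq> 0" "u \<ge> 1" | "t \<noteq> 0" "u < 1" "real N \<le> \<bar>t\<bar>" | "t \<noteq> 0" "u < 1" "\<bar>t\<bar> < real N"
    by linarith
  then show ?thesis
  proof cases
    case 1
    then show ?thesis using t0 by (simp add: min_norm_bound_def)
  next
    case 2
    have "1 \<le> t^2" using t1[OF 2(1)] by (metis one_power2 power2_abs power_mono zero_le_one)
    then have "(u - 1) * 1 \<le> (u - 1) * t^2" using 2 by (intro mult_left_mono) auto
    then have "(u - 1) / real N \<le> (u - 1) * t^2 / real N" using N0 by (simp add: divide_right_mono)
    moreover have "(real N - 1 + u) / real N = 1 + (u - 1) / real N" using N0 by (simp add: field_simps)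
    moreover have "1 \<le> S" using tS t1[OF 2(1)] by linarith
    ultimately have "(real N - 1 + u) / real N \<le> S + (u - 1) * t^2 / real N" by linarith
    then show ?thesis by (simp add: min_norm_bound_def min_le_iff_disj)
  next
    case 3
    have "real N * real N \<le> \<bar>t\<bar> * \<bar>t\<bar>" using 3 N0 by (intro mult_mono) auto
    then have "real N \<le> t^2 / real N" using N0 by (simp add: le_divide_eq power2_eq_square abs_mult[symmetric])
    then have "real N * u \<le> t^2 / real N * u" using u0 by (intro mult_right_mono) auto
    also have "\<dots> = t^2 / real N + (u - 1) * t^2 / real N" using N0 by (simp add: field_simps)
    also have "\<dots> \<le> S + (u - 1) * t^2 / real N" using tNS N0 by (simp add: divide_le_eq mult.commute)
    finally show ?thesis by (simp add: min_norm_bound_def min_le_iff_disj)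
  next
    case 4
    have "min_norm_bound N u \<le> \<bar>t\<bar> - (1 - u) * \<bar>t\<bar>^2 / real N"
      using 4 t1 by (intro min_norm_bound_le_concave[OF N2]) auto
    also have "\<dots> = \<bar>t\<bar> + (u - 1) * t^2 / real N" using N0 by (simp add: field_simps)
    also have "\<dots> \<le> S + (u - 1) * t^2 / real N" using tS by simp
    finally show ?thesis .
  qed
qed

section \<open>Integer vectors\<close>

lemma abs_le_square_int: "\<bar>x::int\<bar> \<le> x^2"
proof (cases "x = 0")
  case False
  then have "\<bar>x\<bar> * 1 \<le> \<bar>x\<bar> * \<bar>x\<bar>" by (intro mult_left_mono) auto
  then show ?thesis by (simp add: power2_eq_square abs_mult[symmetric])
qed simp

lemma abs_sum_le_sum_squares_int:
  fixes k :: "'a \<Rightarrow> int"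
  shows "\<bar>sum k A\<bar> \<le> (\<Sum>i\<in>A. (k i)^2)"
proof -
  have "(\<Sum>i\<in>A. \<bar>k i\<bar>) \<le> (\<Sum>i\<in>A. (k i)^2)" by (intro sum_mono abs_le_square_int)
  then show ?thesis using sum_abs[of k A] by linarith
qed

text \<open>\<open>\<Sum>\<bar>k i\<bar>\<close> is positive and has the parity of \<open>\<Sum>k i = 0\<close>.\<close>
lemma two_le_sum_squares_if_sum_eq_0:
  fixes k :: "'a \<Rightarrow> int"
  assumes "finite A" "i0 \<in> A" "k i0 \<noteq> 0" "sum k A = 0"
  shows "2 \<le> (\<Sum>i\<in>A. (k i)^2)"
proof -
  have "even (\<Sum>i\<in>A. \<bar>k i\<bar> - k i)" by (intro dvd_sum) (simp add: abs_if)
  then have "even (\<Sum>i\<in>A. \<bar>k i\<bar>)" using assms(4) by (simp add: sum_subtractf)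
  moreover have "\<bar>k i0\<bar> \<le> (\<Sum>i\<in>A. \<bar>k i\<bar>)" using assms(1,2) by (intro member_le_sum) auto
  ultimately have "2 \<le> (\<Sum>i\<in>A. \<bar>k i\<bar>)" using assms(3) by presburger
  moreover have "(\<Sum>i\<in>A. \<bar>k i\<bar>) \<le> (\<Sum>i\<in>A. (k i)^2)" by (intro sum_mono abs_le_square_int)
  ultimately show ?thesis by linarith
qed

lemma min_norm_bound_le_int_vector:
  fixes k :: "'n::finite \<Rightarrow> int"
  assumes N2: "CARD('n) \<ge> 2" and u0: "u > 0" and kj: "k j \<noteq> 0"
  shows "min_norm_bound CARD('n) u
    \<le> (\<Sum>i\<in>UNIV. (real_of_int (k i))^2) + (u - 1) * (\<Sum>i\<in>UNIV. real_of_int (k i))^2 / real CARD('n)"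
proof -
  define S where "S = real_of_int (\<Sum>i\<in>UNIV. (k i)^2)"
  define t where "t = real_of_int (sum k UNIV)"
  have "min_norm_bound CARD('n) u \<le> S + (u - 1) * t^2 / real CARD('n)"
  proof (rule min_norm_bound_le[OF N2 u0])
    show "\<bar>t\<bar> \<le> S" unfolding S_def t_def using abs_sum_le_sum_squares_int[of k UNIV] by linarith
    show "t^2 \<le> real CARD('n) * S"
      using sum_squared_le_sum_of_squares[of "\<lambda>i. real_of_int (k i)" UNIV]
      unfolding S_def t_def by (simp add: mult.commute)
    show "2 \<le> S" if "t = 0"
    proof -
      have "sum k UNIV = 0" using that unfolding t_def by (simp only: of_int_eq_0_iff)
      then have "2 \<le> (\<Sum>i\<in>UNIV. (k i)^2)" using two_le_sum_squares_if_sum_eq_0[of UNIV j k] kj by simp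
      then show ?thesis unfolding S_def by (simp only: of_int_numeral_le_iff)
    qed
    show "1 \<le> \<bar>t\<bar>" if "t \<noteq> 0"
    proof -
      have "sum k UNIV \<noteq> 0" using that unfolding t_def by (simp only: of_int_eq_0_iff not_False_eq_True)
      then show ?thesis unfolding t_def of_int_abs[symmetric] of_int_1_le_iff by linarith
    qed
  qed
  then show ?thesis unfolding S_def t_def by simp
qed

section \<open>Determinants\<close>

lemma det_diagonal_but_row:
  fixes A :: "real^'n::finite^'n"
  assumes "\<And>i j. i \<noteq> i0 \<Longrightarrow> j \<noteq> i \<Longrightarrow> A$i$j = 0"
  shows "det A = (\<Prod>i\<in>UNIV. A$i$i)"
proof -
  have nonid: "of_int (sign p) * (\<Prod>i\<in>UNIV. A$i$p i) = 0" if p: "p permutes UNIV" "p \<noteq> id" for p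
  proof -
    obtain i where i: "p i \<noteq> i" using p(2) by (metis eq_id_iff)
    have "p (p i) \<noteq> p i" using i permutes_inj[OF p(1)] by (metis injD)
    then obtain j where "j \<noteq> i0" "p j \<noteq> j" using i by metis
    then have "A$j$p j = 0" using assms by blast
    then have "(\<Prod>i\<in>UNIV. A$i$p i) = 0" by (intro prod_zero) auto
    then show ?thesis by simp
  qed
  have "det A = (\<Sum>p\<in>{p. p permutes (UNIV::'n set)}. if p = id then (\<Prod>i\<in>UNIV. A$i$i) else 0)"
    unfolding det_def by (rule sum.cong[OF refl]) (auto simp: sign_id nonid)
  then show ?thesis using permutes_id[of "UNIV::'n set"] by (simp add: sum.delta)
qed

lemma det_diagonal_but_column:
  fixes A :: "real^'n::finite^'n"
  assumes "\<And>i j. j \<noteq> i0 \<Longrightarrow> j \<noteq> i \<Longrightarrow> A$i$j = 0"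
  shows "det A = (\<Prod>i\<in>UNIV. A$i$i)"
proof -
  have "det (transpose A) = (\<Prod>i\<in>UNIV. transpose A$i$i)"
    by (rule det_diagonal_but_row[of i0]) (simp add: transpose_def assms)
  also have "\<dots> = (\<Prod>i\<in>UNIV. A$i$i)" by (simp add: transpose_def)
  finally show ?thesis by (simp only: det_transpose)
qed

text \<open>Subtracting row \<open>i\<^sub>0\<close> from the others (\<open>P\<close>) and then adding all columns to
  column \<open>i\<^sub>0\<close> (\<open>Q\<close>) leaves a matrix that is diagonal except for row \<open>i\<^sub>0\<close>.\<close>
lemma det_diag_plus_const:
  fixes \<alpha> \<beta> :: real
  shows "det (\<chi> i j. (if i = j then \<alpha> else 0) + \<beta> :: real^'n::finite^'n)
      = \<alpha> ^ (CARD('n) - 1) * (\<alpha> + real CARD('n) * \<beta>)"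
proof -
  obtain i0 :: 'n where True by blast
  define M :: "real^'n^'n" where "M = (\<chi> i j. (if i = j then \<alpha> else 0) + \<beta>)"
  define P :: "real^'n^'n" where "P = (\<chi> i j. (if j = i then 1 else 0) - (if i \<noteq> i0 \<and> j = i0 then 1 else 0))"
  define Q :: "real^'n^'n" where "Q = (\<chi> j k. if k = i0 then 1 else if j = k then 1 else 0)"
  define D :: "real^'n^'n" where "D = (\<chi> i k. if k = i0 then (if i = i0 then \<alpha> + real CARD('n) * \<beta> else 0)
      else if i = i0 then \<beta> else if i = k then \<alpha> else 0)"
  have "det P = (\<Prod>i\<in>UNIV. P$i$i)" "det Q = (\<Prod>i\<in>UNIV. Q$i$i)"
    by (rule det_diagonal_but_column[of i0], simp add: P_def Q_def)+
  moreover have "(\<Prod>i\<in>UNIV. P$i$i) = 1" "(\<Prod>i\<in>UNIV. Q$i$i) = 1"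
    by (rule prod.neutral, simp add: P_def Q_def)+
  ultimately have "det P = 1" "det Q = 1" by simp_all
  have PM: "(P ** M)$i$j = M$i$j - (if i \<noteq> i0 then M$i0$j else 0)" for i j
  proof -
    have "(P ** M)$i$j = (\<Sum>k\<in>UNIV. (if k = i then M$k$j else 0) - (if i \<noteq> i0 \<and> k = i0 then M$k$j else 0))"
      unfolding matrix_matrix_mult_def P_def by (auto intro!: sum.cong simp: left_diff_distrib)
    then show ?thesis by (cases "i = i0") (simp_all add: sum_subtractf)
  qed
  have PMQ: "(P ** M ** Q)$i$k = (\<Sum>j\<in>UNIV. (P ** M)$i$j * Q$j$k)" for i k
    by (simp add: matrix_matrix_mult_def)
  have "(P ** M ** Q)$i$k = D$i$k" for i k
  proof (cases "k = i0")
    case True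
    then have "(P ** M ** Q)$i$k = (\<Sum>j\<in>UNIV. M$i$j - (if i \<noteq> i0 then M$i0$j else 0))"
      unfolding PMQ by (simp add: Q_def PM)
    also have "\<dots> = (\<Sum>j\<in>UNIV. M$i$j) - (if i \<noteq> i0 then \<Sum>j\<in>UNIV. M$i0$j else 0)"
      by (simp add: sum_subtractf)
    finally show ?thesis using True by (simp add: M_def D_def sum.distrib)
  next
    case False
    have "(P ** M ** Q)$i$k = (\<Sum>j\<in>UNIV. if j = k then (P ** M)$i$j else 0)"
      unfolding PMQ by (rule sum.cong) (auto simp: Q_def False)
    also have "\<dots> = (P ** M)$i$k" by simp
    also have "\<dots> = D$i$k" unfolding PM using False by (simp add: M_def D_def)
    finally show ?thesis .
  qed
  then have "det M = det D"
    using \<open>det P = 1\<close> \<open>det Q = 1\<close> by (metis det_mul mult_1 mult_1_right vec_eq_iff)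
  also have "\<dots> = (\<Prod>i\<in>UNIV. D$i$i)" by (rule det_diagonal_but_row[of i0]) (simp add: D_def)
  also have "\<dots> = D$i0$i0 * (\<Prod>i\<in>UNIV-{i0}. D$i$i)" by (simp add: prod.remove)
  also have "(\<Prod>i\<in>UNIV-{i0}. D$i$i) = (\<Prod>i\<in>UNIV-{i0}. \<alpha>)" by (rule prod.cong) (simp_all add: D_def)
  finally show ?thesis by (simp add: M_def D_def card_Diff_singleton mult.commute)
qed

lemma det_of_int_matrix_Ints: "det (\<chi> i j. real_of_int (U i j) :: real^'n::finite^'n) \<in> \<int>"
  unfolding det_def by (intro Ints_sum Ints_mult Ints_prod) auto

lemma rows_lincomb_eq_matrix_mult:
  "(\<chi> i. \<Sum>j\<in>UNIV. c i j *\<^sub>R (B j :: real^'n::finite)) = (\<chi> i j. c i j) ** (\<chi> i. B i)"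
  by (simp add: vec_eq_iff matrix_matrix_mult_def sum_component)

section \<open>Lattices\<close>

lemma basis_in_lattice_gen: "B i \<in> lattice_gen B"
proof -
  have "(\<Sum>j\<in>UNIV. real_of_int (if j = i then 1 else 0) *\<^sub>R B j) = (\<Sum>j\<in>UNIV. if j = i then B j else 0)"
    by (rule sum.cong) auto
  then have "B i = (\<Sum>j\<in>UNIV. real_of_int (if j = i then 1 else 0) *\<^sub>R B j)" by simp
  then show ?thesis unfolding lattice_gen_def by (intro CollectI exI[of _ "\<lambda>j. if j = i then 1 else 0"]) simp
qed

lemma lattice_gen_diff:
  assumes "x \<in> lattice_gen B" "y \<in> lattice_gen B" shows "x - y \<in> lattice_gen B"
proof -
  obtain k l where "x = (\<Sum>i\<in>UNIV. of_int (k i) *\<^sub>R B i)" "y = (\<Sum>i\<in>UNIV. of_int (l i) *\<^sub>R B i)"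
    using assms unfolding lattice_gen_def by auto
  then have "x - y = (\<Sum>i\<in>UNIV. of_int (k i - l i) *\<^sub>R B i)"
    by (simp add: sum_subtractf scaleR_diff_left)
  then show ?thesis unfolding lattice_gen_def by (intro CollectI exI[of _ "\<lambda>i. k i - l i"]) simp
qed

lemma linear_image_lattice_gen:
  assumes "linear T" shows "T ` lattice_gen B = lattice_gen (T \<circ> B)"
proof -
  have "T (\<Sum>i\<in>UNIV. of_int (k i) *\<^sub>R B i) = (\<Sum>i\<in>UNIV. of_int (k i) *\<^sub>R (T \<circ> B) i)" for k
    using assms by (simp add: linear_sum linear_cmul)
  then show ?thesis unfolding lattice_gen_def by (auto simp: image_iff) metis
qed

lemma is_lattice_basis_linear_image:
  assumes T: "linear T" "inj T" and B: "is_lattice_basis B"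
  shows "is_lattice_basis (T \<circ> B)"
proof -
  have "independent (T ` range B)"
    using B T by (intro linear_independent_injective_image) (auto simp: is_lattice_basis_def intro: inj_on_subset)
  then show ?thesis using B T by (simp add: is_lattice_basis_def image_comp inj_compose)
qed

lemma is_lattice_basis_nonzero: "is_lattice_basis B \<Longrightarrow> B i \<noteq> 0"
  using dependent_zero[of "range B"] unfolding is_lattice_basis_def by (metis rangeI)

text \<open>Two bases of the same lattice differ by an integer matrix with integer inverse.\<close>
lemma abs_det_eq_if_lattice_gen_eq:
  fixes B B' :: "'n::finite \<Rightarrow> real^'n"
  assumes eq: "lattice_gen B' = lattice_gen B" and nz: "det (\<chi> i. B i) \<noteq> 0"
  shows "\<bar>det (\<chi> i. B' i)\<bar> = \<bar>det (\<chi> i. B i)\<bar>"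
proof -
  have "\<exists>U. (\<chi> i. C i) = (\<chi> i j. real_of_int (U i j)) ** (\<chi> i. D i)"
    if "lattice_gen C = lattice_gen D" for C D :: "'n \<Rightarrow> real^'n"
  proof -
    have "\<forall>i. \<exists>k. C i = (\<Sum>j\<in>UNIV. of_int (k j) *\<^sub>R D j)"
      using basis_in_lattice_gen[of C] that unfolding lattice_gen_def by blast
    then obtain U where "\<And>i. C i = (\<Sum>j\<in>UNIV. of_int (U i j) *\<^sub>R D j)" by metis
    then show ?thesis using rows_lincomb_eq_matrix_mult[of "\<lambda>i j. real_of_int (U i j)" D] by auto
  qed
  then obtain U V where U: "(\<chi> i. B' i) = (\<chi> i j. real_of_int (U i j)) ** (\<chi> i. B i)"
    and V: "(\<chi> i. B i) = (\<chi> i j. real_of_int (V i j)) ** (\<chi> i. B' i)"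
    using eq by metis
  obtain p where p: "det (\<chi> i j. real_of_int (U i j) :: real^'n^'n) = of_int p"
    using det_of_int_matrix_Ints Ints_cases by metis
  obtain q where q: "det (\<chi> i j. real_of_int (V i j) :: real^'n^'n) = of_int q"
    using det_of_int_matrix_Ints Ints_cases by metis
  have "det (\<chi> i. B i) = of_int q * of_int p * det (\<chi> i. B i)"
    using U V p q by (metis det_mul mult.assoc)
  then have "of_int (q * p) = (1::real)" using nz by simp
  then have "q * p = 1" by (simp only: of_int_eq_1_iff)
  then have "\<bar>real_of_int p\<bar> = 1" by (metis zmult_eq_1_iff abs_1 abs_minus of_int_abs of_int_1)
  then show ?thesis using U p by (simp add: det_mul abs_mult)
qed

lemma covol_lattice_gen:
  assumes "is_lattice_basis B" "det (\<chi> i. B i) \<noteq> 0"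
  shows "covol (lattice_gen B) = \<bar>det (\<chi> i. B i)\<bar>"
proof -
  define B' where "B' = (SOME B'. is_lattice_basis B' \<and> lattice_gen B' = lattice_gen B)"
  have "is_lattice_basis B' \<and> lattice_gen B' = lattice_gen B"
    unfolding B'_def by (rule someI[of _ B]) (simp add: assms(1))
  then have "\<bar>det (\<chi> i. B' i)\<bar> = \<bar>det (\<chi> i. B i)\<bar>"
    using assms(2) by (intro abs_det_eq_if_lattice_gen_eq) auto
  then show ?thesis unfolding covol_def B'_def .
qed

lemma gram_matrix_rows: "(\<chi> i. B i) ** transpose (\<chi> i. B i) = (\<chi> i j. B i \<bullet> (B j :: real^'n::finite))"
  by (simp add: vec_eq_iff matrix_matrix_mult_def transpose_def inner_vec_def)

lemma lambda1_le_norm: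
  assumes "x \<in> L" "x \<noteq> 0" shows "lambda1 L \<le> norm x"
  unfolding lambda1_def using assms by (intro cInf_lower bdd_belowI[of _ 0]) auto

lemma le_lambda1:
  assumes "x \<in> L" "x \<noteq> 0" and "\<And>y. y \<in> L \<Longrightarrow> y \<noteq> 0 \<Longrightarrow> b \<le> norm y"
  shows "b \<le> lambda1 L"
  unfolding lambda1_def using assms by (intro cInf_greatest) auto

lemma norm_lincomb_uniform_gram:
  fixes B :: "'n::finite \<Rightarrow> real^'n" and k :: "'n \<Rightarrow> real"
  assumes "\<And>i j. B i \<bullet> B j = (if i = j then \<alpha> else 0) + \<beta>"
  shows "(norm (\<Sum>i\<in>UNIV. k i *\<^sub>R B i))^2 = \<alpha> * (\<Sum>i\<in>UNIV. (k i)^2) + \<beta> * (\<Sum>i\<in>UNIV. k i)^2"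
proof -
  have "(norm (\<Sum>i\<in>UNIV. k i *\<^sub>R B i))^2 = (\<Sum>i\<in>UNIV. \<Sum>j\<in>UNIV. k i * k j * (B j \<bullet> B i))"
    by (simp add: power2_norm_eq_inner inner_sum_left inner_sum_right sum_distrib_left mult_ac)
  also have "\<dots> = (\<Sum>i\<in>UNIV. \<Sum>j\<in>UNIV. (if i = j then \<alpha> * (k i)^2 else 0) + \<beta> * k i * k j)"
    by (intro sum.cong refl) (simp add: assms power2_eq_square algebra_simps)
  also have "\<dots> = \<alpha> * (\<Sum>i\<in>UNIV. (k i)^2) + \<beta> * (\<Sum>i\<in>UNIV. k i)^2"
    by (simp add: sum.distrib sum_distrib_left sum_distrib_right power2_eq_square mult_ac)
  finally show ?thesis .
qed

section \<open>Lattices with Gram matrix \<open>\<alpha> I + \<beta> J\<close>\<close>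

locale uniform_gram_basis =
  fixes B :: "'n::finite \<Rightarrow> real^'n" and \<alpha> u :: real
  assumes basis: "is_lattice_basis B"
    and card_ge_2: "CARD('n) \<ge> 2"
    and alpha_pos: "\<alpha> > 0"
    and u_pos: "u > 0"
    and gram: "\<And>i j. B i \<bullet> B j = (if i = j then \<alpha> else 0) + (u - 1) * \<alpha> / real CARD('n)"
begin

lemma card_pos: "real CARD('n) > 0"
  using card_ge_2 by simp

lemma det_rows_square: "(det (\<chi> i. B i))^2 = \<alpha> ^ CARD('n) * u"
proof -
  have "(det (\<chi> i. B i))^2 = det ((\<chi> i. B i) ** transpose (\<chi> i. B i))"
    by (simp add: det_mul det_transpose power2_eq_square)
  also have "\<dots> = det (\<chi> i j. (if i = j then \<alpha> else 0) + (u - 1) * \<alpha> / real CARD('n) :: real^'n^'n)"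
    by (simp add: gram_matrix_rows gram)
  also have "\<dots> = \<alpha> ^ (CARD('n) - 1) * (\<alpha> * u)"
    unfolding det_diag_plus_const using card_pos by (simp add: field_simps)
  also have "\<dots> = \<alpha> ^ CARD('n) * u"
    using card_ge_2 by (simp add: power_eq_if)
  finally show ?thesis .
qed

lemma covol_eq: "covol (lattice_gen B) = sqrt (\<alpha> ^ CARD('n) * u)"
proof -
  have "(det (\<chi> i. B i))^2 > 0" unfolding det_rows_square using alpha_pos u_pos by simp
  then have "det (\<chi> i. B i) \<noteq> 0" by auto
  then have "covol (lattice_gen B) = \<bar>det (\<chi> i. B i)\<bar>" by (rule covol_lattice_gen[OF basis])
  also have "\<dots> = sqrt (\<alpha> ^ CARD('n) * u)" by (simp flip: det_rows_square)
  finally show ?thesis .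
qed

lemma norm_square_lincomb:
  "(norm (\<Sum>i\<in>UNIV. k i *\<^sub>R B i))^2
     = \<alpha> * ((\<Sum>i\<in>UNIV. (k i)^2) + (u - 1) * (\<Sum>i\<in>UNIV. k i)^2 / real CARD('n))"
  using norm_lincomb_uniform_gram[OF gram] by (simp add: algebra_simps)

lemma norm_square_ge:
  assumes "x \<in> lattice_gen B" "x \<noteq> 0"
  shows "\<alpha> * min_norm_bound CARD('n) u \<le> (norm x)^2"
proof -
  obtain k where x: "x = (\<Sum>i\<in>UNIV. of_int (k i) *\<^sub>R B i)"
    using assms(1) unfolding lattice_gen_def by auto
  obtain j where "k j \<noteq> 0" using assms(2) unfolding x by fastforce
  then show ?thesis
    unfolding x norm_square_lincomb using min_norm_bound_le_int_vector[OF card_ge_2 u_pos] alpha_pos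
    by (simp add: mult_left_mono)
qed

lemma lambda1_square_ge: "\<alpha> * min_norm_bound CARD('n) u \<le> (lambda1 (lattice_gen B))^2"
proof -
  have "sqrt (\<alpha> * min_norm_bound CARD('n) u) \<le> lambda1 (lattice_gen B)"
    using basis_in_lattice_gen is_lattice_basis_nonzero[OF basis]
  proof (rule le_lambda1)
    show "sqrt (\<alpha> * min_norm_bound CARD('n) u) \<le> norm y" if "y \<in> lattice_gen B" "y \<noteq> 0" for y
      using real_sqrt_le_mono[OF norm_square_ge[OF that]] by simp
  qed
  then show ?thesis by (rule sqrt_le_D)
qed

lemma lambda1_nonneg: "0 \<le> lambda1 (lattice_gen B)"
  using basis_in_lattice_gen is_lattice_basis_nonzero[OF basis] by (rule le_lambda1) simp

lemma lambda1_square_le_basis: "(lambda1 (lattice_gen B))^2 \<le> \<alpha> * ((real CARD('n) - 1 + u) / real CARD('n))"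
proof -
  obtain i :: 'n where True by blast
  have "(lambda1 (lattice_gen B))^2 \<le> (norm (B i))^2"
    using lambda1_le_norm[OF basis_in_lattice_gen is_lattice_basis_nonzero[OF basis]] lambda1_nonneg
    by (intro power_mono)
  also have "\<dots> = \<alpha> * ((real CARD('n) - 1 + u) / real CARD('n))"
    using card_pos by (simp add: power2_norm_eq_inner gram field_simps)
  finally show ?thesis .
qed

lemma lambda1_square_le_diff: "(lambda1 (lattice_gen B))^2 \<le> 2 * \<alpha>"
proof -
  obtain i j :: 'n where ij: "i \<noteq> j"
    using card_ge_2 card_le_Suc0_iff_eq[of "UNIV :: 'n set"] by fastforce
  have norm_diff: "(norm (B i - B j))^2 = 2 * \<alpha>"
    using ij by (simp add: power2_norm_eq_inner inner_diff_left inner_diff_right gram)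
  then have "B i - B j \<noteq> 0" using alpha_pos by auto
  then have "(lambda1 (lattice_gen B))^2 \<le> (norm (B i - B j))^2"
    using lambda1_le_norm[OF lattice_gen_diff[OF basis_in_lattice_gen basis_in_lattice_gen]] lambda1_nonneg
    by (intro power_mono)
  then show ?thesis unfolding norm_diff .
qed

lemma center_density_eq:
  "center_density (lattice_gen B)
     = sqrt (((lambda1 (lattice_gen B))^2 / \<alpha>) ^ CARD('n) / u) / 2 ^ CARD('n)"
proof -
  have "lambda1 (lattice_gen B) ^ CARD('n) = sqrt (((lambda1 (lattice_gen B))^2) ^ CARD('n))"
    using lambda1_nonneg by (simp add: real_sqrt_power)
  then show ?thesis
    unfolding center_density_def covol_eq
    by (simp add: power_divide real_sqrt_divide real_sqrt_mult mult.commute)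
qed


lemma center_density_ge:
  assumes lo: "1 / (real CARD('n) + 1) \<le> u" and hi: "u \<le> real CARD('n) + 1"
  shows "1 / 2 ^ CARD('n) \<le> center_density (lattice_gen B)"
proof -
  define \<rho> where "\<rho> = (lambda1 (lattice_gen B))^2 / \<alpha>"
  have "min_norm_bound CARD('n) u \<le> \<rho>"
    unfolding \<rho>_def using lambda1_square_ge alpha_pos by (simp add: field_simps)
  moreover have "0 \<le> min_norm_bound CARD('n) u"
    using u_pos card_pos by (simp add: min_norm_bound_def)
  ultimately have "u \<le> \<rho> ^ CARD('n)"
    using le_min_norm_bound_power[OF card_ge_2 lo hi] power_mono order_trans by blast
  then have "1 \<le> sqrt (\<rho> ^ CARD('n) / u)" using u_pos by simp
  then show ?thesis unfolding center_density_eq \<rho>_def[symmetric] by (simp add: divide_right_mono)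
qed

lemma center_density_le:
  assumes lo: "1 / (real CARD('n) + 1) \<le> u" and hi: "u \<le> real CARD('n) + 1"
  shows "center_density (lattice_gen B) \<le> 1 / (2 powr (real CARD('n) / 2) * sqrt (real CARD('n) + 1))"
proof -
  define \<rho> where "\<rho> = (lambda1 (lattice_gen B))^2 / \<alpha>"
  have "\<rho> \<le> (real CARD('n) - 1 + u) / real CARD('n)"
    unfolding \<rho>_def using lambda1_square_le_basis alpha_pos by (simp add: field_simps)
  moreover have "0 \<le> \<rho>" unfolding \<rho>_def using alpha_pos by simp
  ultimately have "\<rho> ^ CARD('n) * (real CARD('n) + 1)
      \<le> ((real CARD('n) - 1 + u) / real CARD('n)) ^ CARD('n) * (real CARD('n) + 1)"
    by (intro mult_right_mono power_mono) auto
  also have "\<dots> \<le> 2 ^ CARD('n) * u" by (rule mean_power_le_two_power[OF card_ge_2 lo hi])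
  finally have "\<rho> ^ CARD('n) * (real CARD('n) + 1) \<le> 2 ^ CARD('n) * u" .
  then have "\<rho> ^ CARD('n) / u \<le> 2 ^ CARD('n) / (real CARD('n) + 1)"
    using u_pos by (simp add: field_simps)
  then have "sqrt (\<rho> ^ CARD('n) / u) / 2 ^ CARD('n) \<le> sqrt (2 ^ CARD('n) / (real CARD('n) + 1)) / 2 ^ CARD('n)"
    by (simp add: divide_right_mono)
  also have "\<dots> = 1 / (2 powr (real CARD('n) / 2) * sqrt (real CARD('n) + 1))"
    by (rule sqrt_two_power_divide)
  finally show ?thesis unfolding center_density_eq \<rho>_def[symmetric] .
qed

lemma lambda1_square_eq_if_u_eq_1: "u = 1 \<Longrightarrow> (lambda1 (lattice_gen B))^2 = \<alpha>"
  using lambda1_square_ge lambda1_square_le_basis card_pos card_ge_2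
  by (simp add: min_norm_bound_def)

lemma center_density_eq_if_u_eq_1: "u = 1 \<Longrightarrow> center_density (lattice_gen B) = 1 / 2 ^ CARD('n)"
  using lambda1_square_eq_if_u_eq_1 alpha_pos unfolding center_density_eq by simp

lemma lambda1_square_eq_if_u_eq_succ:
  assumes "u = real CARD('n) + 1" shows "(lambda1 (lattice_gen B))^2 = 2 * \<alpha>"
proof -
  have "2 * 1 \<le> real CARD('n) * u" using assms card_ge_2 by (intro mult_mono) auto
  moreover have "(real CARD('n) - 1 + u) / real CARD('n) = 2" using assms card_pos by (simp add: field_simps)
  ultimately have "min_norm_bound CARD('n) u = 2" by (simp add: min_norm_bound_def)
  then show ?thesis using lambda1_square_ge lambda1_square_le_diff by simp
qed

lemma center_density_eq_if_u_eq_succ: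
  assumes "u = real CARD('n) + 1"
  shows "center_density (lattice_gen B) = 1 / (2 powr (real CARD('n) / 2) * sqrt (real CARD('n) + 1))"
  using lambda1_square_eq_if_u_eq_succ[OF assms] alpha_pos sqrt_two_power_divide
  unfolding center_density_eq assms by simp

end

section \<open>Twisted tame lattices\<close>

definition twist_map :: "real \<Rightarrow> real \<Rightarrow> 'a::real_inner \<Rightarrow> 'a \<Rightarrow> 'a" where
  "twist_map r s v x = r *\<^sub>R x + (s * (x \<bullet> v)) *\<^sub>R v"

lemma linear_twist_map: "linear (twist_map r s v)"
  by (rule linearI) (simp_all add: twist_map_def inner_add_left algebra_simps scaleR_add_left)

lemma twist_lattice_lattice_gen: "twist_lattice r s v (lattice_gen B) = lattice_gen (twist_map r s v \<circ> B)"
  unfolding twist_lattice_def linear_image_lattice_gen[OF linear_twist_map, symmetric]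
  by (simp add: twist_map_def)

lemma inj_twist_map:
  assumes "r \<noteq> 0" "r + s * (v \<bullet> v) \<noteq> 0"
  shows "inj (twist_map r s v)"
proof -
  have "x = 0" if "twist_map r s v x = 0" for x
  proof -
    have "(x \<bullet> v) * (r + s * (v \<bullet> v)) = twist_map r s v x \<bullet> v"
      by (simp add: twist_map_def inner_add_left algebra_simps)
    then have "x \<bullet> v = 0" using that assms(2) by simp
    then have "r *\<^sub>R x = 0" using that by (simp add: twist_map_def)
    then show "x = 0" using assms(1) by simp
  qed
  then show ?thesis using linear_injective_0[OF linear_twist_map] by blast
qed

lemma tame_basis_inner:
  "tame_basis e a h \<Longrightarrow> e i \<bullet> e j = (if i = j then a + h else 0) - h"
  unfolding tame_basis_def Let_def by (cases "i = j") auto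

lemma tame_basis_inner_sum: "tame_basis e a h \<Longrightarrow> e i \<bullet> (\<Sum>j\<in>UNIV. e j) = 1"
  unfolding tame_basis_def Let_def by auto

lemma tame_basis_sum_inner_sum:
  "tame_basis (e :: 'n::finite \<Rightarrow> real^'n) a h \<Longrightarrow> (\<Sum>i\<in>UNIV. e i) \<bullet> (\<Sum>i\<in>UNIV. e i) = real CARD('n)"
  by (simp add: inner_sum_left tame_basis_inner_sum)

lemma tame_basis_normalization:
  assumes "tame_basis (e :: 'n::finite \<Rightarrow> real^'n) a h"
  shows "a - h * (real CARD('n) - 1) = 1"
proof -
  obtain i :: 'n where True by blast
  have "1 = (\<Sum>j\<in>UNIV. e i \<bullet> e j)"
    using tame_basis_inner_sum[OF assms] by (simp add: inner_sum_right)
  also have "\<dots> = a + h - real CARD('n) * h"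
    by (simp add: tame_basis_inner[OF assms] sum_subtractf)
  finally show ?thesis by (simp add: algebra_simps)
qed

lemma tame_basis_diag_pos:
  assumes "tame_basis (e :: 'n::finite \<Rightarrow> real^'n) a h" "CARD('n) \<ge> 2"
  shows "a + h > 0"
proof -
  obtain i j :: 'n where ij: "i \<noteq> j"
    using assms(2) card_le_Suc0_iff_eq[of "UNIV :: 'n set"] by fastforce
  then have "e i \<noteq> e j" using assms(1) unfolding tame_basis_def is_lattice_basis_def by (metis injD)
  then have "0 < (e i - e j) \<bullet> (e i - e j)" by simp
  also have "\<dots> = 2 * (a + h)"
    using ij by (simp add: inner_diff_left inner_diff_right tame_basis_inner[OF assms(1)])
  finally show ?thesis by simp
qed

lemma tame_basis_ratio_bounds:
  assumes "tame_basis (e :: 'n::finite \<Rightarrow> real^'n) a h" "CARD('n) \<ge> 2"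
  shows "(real CARD('n) * a - 1) / (real CARD('n) ^ 2 - 1) \<le> \<rho> \<longleftrightarrow> 1 / (real CARD('n) + 1) \<le> \<rho> / (a + h)"
    and "\<rho> \<le> (real CARD('n) * a - 1) * (real CARD('n) + 1) / (real CARD('n) - 1)
           \<longleftrightarrow> \<rho> / (a + h) \<le> real CARD('n) + 1"
    and "\<rho> = (real CARD('n) * a - 1) / (real CARD('n) - 1) \<longleftrightarrow> \<rho> / (a + h) = 1"
    and "\<rho> = (real CARD('n) * a - 1) * (real CARD('n) + 1) / (real CARD('n) - 1)
           \<longleftrightarrow> \<rho> / (a + h) = real CARD('n) + 1"
proof -
  define N where "N = real CARD('n)"
  have c: "a + h > 0" by (rule tame_basis_diag_pos[OF assms])
  have N1: "N - 1 > 0" unfolding N_def using assms(2) by simp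
  have a_eq: "a = 1 + h * (N - 1)" using tame_basis_normalization[OF assms(1)] unfolding N_def by simp
  have na: "N * a - 1 = (N - 1) * (a + h)" unfolding a_eq by (simp add: algebra_simps)
  have "N ^ 2 - 1 = (N - 1) * (N + 1)" by (simp add: power2_eq_square algebra_simps)
  then have "(N * a - 1) / (N ^ 2 - 1) = (a + h) / (N + 1)" unfolding na using N1 by simp
  then show "(N * a - 1) / (N ^ 2 - 1) \<le> \<rho> \<longleftrightarrow> 1 / (N + 1) \<le> \<rho> / (a + h)"
    using c N1 by (simp add: divide_le_eq le_divide_eq mult.commute)
  have "(N * a - 1) * (N + 1) / (N - 1) = (a + h) * (N + 1)" unfolding na using N1 by simp
  then show "\<rho> \<le> (N * a - 1) * (N + 1) / (N - 1) \<longleftrightarrow> \<rho> / (a + h) \<le> N + 1"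
    and "\<rho> = (N * a - 1) * (N + 1) / (N - 1) \<longleftrightarrow> \<rho> / (a + h) = N + 1"
    using c by (auto simp: divide_le_eq field_simps)
  show "\<rho> = (N * a - 1) / (N - 1) \<longleftrightarrow> \<rho> / (a + h) = 1"
    unfolding na using c N1 by auto
qed

lemma twisted_tame_basis_uniform_gram:
  fixes e :: "'n::finite \<Rightarrow> real^'n" and r s m :: real
  assumes tame: "tame_basis e a h" and N2: "CARD('n) \<ge> 2"
    and r: "r \<noteq> 0" and m: "m = r + s * real CARD('n)" "m \<noteq> 0"
  shows "uniform_gram_basis (twist_map r s (\<Sum>i\<in>UNIV. e i) \<circ> e) (r^2 * (a + h)) ((m / r)^2 / (a + h))"
proof
  define v where "v = (\<Sum>i\<in>UNIV. e i)"
  define N where "N = real CARD('n)"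
  have c: "a + h > 0" by (rule tame_basis_diag_pos[OF tame N2])
  have N0: "N > 0" unfolding N_def by simp
  have vv: "v \<bullet> v = N" unfolding v_def N_def by (rule tame_basis_sum_inner_sum[OF tame])
  show "is_lattice_basis (twist_map r s v \<circ> e)"
    using tame r m vv unfolding tame_basis_def N_def
    by (intro is_lattice_basis_linear_image linear_twist_map inj_twist_map) auto
  show "CARD('n) \<ge> 2" by (fact N2)
  show "r^2 * (a + h) > 0" using r c by simp
  show "(m / r)^2 / (a + h) > 0" using r m c by simp
  have Te: "(twist_map r s v \<circ> e) i = r *\<^sub>R e i + s *\<^sub>R v" for i
    using tame_basis_inner_sum[OF tame] by (simp add: twist_map_def v_def)
  have ah: "a + h = 1 + N * h"
    using tame_basis_normalization[OF tame] unfolding N_def by (simp add: algebra_simps)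
  have ev: "e i \<bullet> v = 1" "v \<bullet> e i = 1" for i
    using tame_basis_inner_sum[OF tame, of i] by (simp_all add: v_def inner_commute)
  have "(m / r)^2 / (a + h) * (r^2 * (a + h)) = (r + s * N)^2"
    using r c m(1) unfolding N_def by (simp add: power_divide)
  then have beta: "((m / r)^2 / (a + h) - 1) * (r^2 * (a + h)) / N = 2 * r * s + s^2 * N - r^2 * h"
    using N0 by (simp add: left_diff_distrib ah field_simps power2_eq_square)
  fix i j
  have "(twist_map r s v \<circ> e) i \<bullet> (twist_map r s v \<circ> e) j = r^2 * (e i \<bullet> e j) + 2 * r * s + s^2 * N"
    unfolding Te by (simp add: inner_add_left inner_add_right ev vv power2_eq_square algebra_simps)
  also have "\<dots> = (if i = j then r^2 * (a + h) else 0) + ((m / r)^2 / (a + h) - 1) * (r^2 * (a + h)) / N"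
    unfolding beta tame_basis_inner[OF tame] by (simp add: algebra_simps)
  finally show "(twist_map r s v \<circ> e) i \<bullet> (twist_map r s v \<circ> e) j
      = (if i = j then r^2 * (a + h) else 0) + ((m / r)^2 / (a + h) - 1) * (r^2 * (a + h)) / real CARD('n)"
    unfolding N_def .
qed

theorem mainTheorem5:
  fixes e :: "'n::finite \<Rightarrow> real^'n" and a h :: real and r s m :: int
  assumes n2: "CARD('n) \<ge> 2"
    and tame: "tame_basis e a h"
    and r_ne: "r \<noteq> 0" and r_lt: "\<bar>r\<bar> < int CARD('n)"
    and m_def: "m = r + s * int CARD('n)"
    and lo: "(real CARD('n) * a - 1) / (real CARD('n) ^ 2 - 1) \<le> (real_of_int m / real_of_int r) ^ 2"
    and hi: "(real_of_int m / real_of_int r) ^ 2 \<le>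
               (real CARD('n) * a - 1) * (real CARD('n) + 1) / (real CARD('n) - 1)"
  shows "1 / 2 ^ CARD('n) \<le> center_density (twist_lattice (of_int r) (of_int s) (\<Sum>i\<in>UNIV. e i) (lattice_gen e))
       \<and> center_density (twist_lattice (of_int r) (of_int s) (\<Sum>i\<in>UNIV. e i) (lattice_gen e))
           \<le> 1 / (2 powr (real CARD('n) / 2) * sqrt (real CARD('n) + 1))
       \<and> ((real_of_int m / real_of_int r) ^ 2 = (real CARD('n) * a - 1) / (real CARD('n) - 1) \<longrightarrow>
           center_density (twist_lattice (of_int r) (of_int s) (\<Sum>i\<in>UNIV. e i) (lattice_gen e)) = 1 / 2 ^ CARD('n))
       \<and> ((real_of_int m / real_of_int r) ^ 2 = (real CARD('n) * a - 1) * (real CARD('n) + 1) / (real CARD('n) - 1) \<longrightarrow>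
           center_density (twist_lattice (of_int r) (of_int s) (\<Sum>i\<in>UNIV. e i) (lattice_gen e))
             = 1 / (2 powr (real CARD('n) / 2) * sqrt (real CARD('n) + 1)))"
proof -
  define u where "u = (real_of_int m / real_of_int r)^2 / (a + h)"
  note ratio = tame_basis_ratio_bounds[OF tame n2, of "(real_of_int m / real_of_int r)^2", folded u_def]
  have u_lo: "1 / (real CARD('n) + 1) \<le> u" using lo ratio(1) by blast
  have u_hi: "u \<le> real CARD('n) + 1" using hi ratio(2) by blast
  have "0 < 1 / (real CARD('n) + 1)" by simp
  then have "real_of_int m \<noteq> 0" using u_lo unfolding u_def by auto
  moreover have "real_of_int m = real_of_int r + real_of_int s * real CARD('n)" using m_def by simp
  ultimately interpret uniform_gram_basis "twist_map r s (\<Sum>i\<in>UNIV. e i) \<circ> e" "(real_of_int r)^2 * (a + h)" u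
    unfolding u_def using twisted_tame_basis_uniform_gram[OF tame n2] r_ne by simp
  show ?thesis
    unfolding twist_lattice_lattice_gen ratio(3,4)
    using center_density_ge[OF u_lo u_hi] center_density_le[OF u_lo u_hi]
      center_density_eq_if_u_eq_1 center_density_eq_if_u_eq_succ
    by blast
qed

end
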